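(* Let $G$ be a connected cubic graph on $n$ vertices. Then $M(G)\leq Z(G)\leq n/2+1$.
   Context: A cubic graph is a $3$-regular simple graph. For a graph $G$ on vertices $w_1,\dots,w_n$, $S(G)$ is the set of real symmetric $n\times n$ matrices $A$ such that for $s\neq t$, $a_{st}\neq 0$ if and only if $w_s$ and $w_t$ are adjacent (diagonal entries arbitrary); the maximum nullity $M(G)$ is the maximum nullity of a matrix in $S(G)$. Zero forcing: color each vertex black or white; if a black vertex has exactly one white neighbor, that neighbor is recolored black. A set $Z$ is a zero forcing set if starting with exactly $Z$ black and applying this rule repeatedly makes all vertices black; $Z(G)$ is the minimum size of a zero forcing set. *)

theory Defs
  imports "HOL-Analysis.Analysis"
begin

definition cubic_graph :: "('n::finite \<Rightarrow> 'n \<Rightarrow> bool) \<Rightarrow> bool" where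
  "cubic_graph E \<longleftrightarrow> (\<forall>u v. E u v \<longrightarrow> E v u) \<and> (\<forall>v. \<not> E v v)
     \<and> (\<forall>v. card {u. E v u} = 3)"

definition connected_graph :: "('n::finite \<Rightarrow> 'n \<Rightarrow> bool) \<Rightarrow> bool" where
  "connected_graph E \<longleftrightarrow> (\<forall>u v. (u, v) \<in> {(x, y). E x y}\<^sup>*)"

definition SG :: "('n::finite \<Rightarrow> 'n \<Rightarrow> bool) \<Rightarrow> (real^'n^'n) set" where
  "SG E = {A. transpose A = A \<and> (\<forall>s t. s \<noteq> t \<longrightarrow> (A $ s $ t \<noteq> 0 \<longleftrightarrow> E s t))}"

definition nullity :: "real^'n::finite^'m::finite \<Rightarrow> nat" where
  "nullity A = dim {x. A *v x = 0}"

definition max_nullity :: "('n::finite \<Rightarrow> 'n \<Rightarrow> bool) \<Rightarrow> nat" where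
  "max_nullity E = Max (nullity ` SG E)"

inductive forced :: "('n \<Rightarrow> 'n \<Rightarrow> bool) \<Rightarrow> 'n set \<Rightarrow> 'n \<Rightarrow> bool"
  for E :: "'n \<Rightarrow> 'n \<Rightarrow> bool" and Z :: "'n set" where
  init: "v \<in> Z \<Longrightarrow> forced E Z v"
| force: "forced E Z u \<Longrightarrow> E u v \<Longrightarrow> (\<forall>w. E u w \<and> w \<noteq> v \<longrightarrow> forced E Z w)
           \<Longrightarrow> forced E Z v"

definition zero_forcing_set :: "('n \<Rightarrow> 'n \<Rightarrow> bool) \<Rightarrow> 'n set \<Rightarrow> bool" where
  "zero_forcing_set E Z \<longleftrightarrow> (\<forall>v. forced E Z v)"

definition zero_forcing_number :: "('n::finite \<Rightarrow> 'n \<Rightarrow> bool) \<Rightarrow> nat" where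
  "zero_forcing_number E = Min (card ` {Z. zero_forcing_set E Z})"

end

theory Submission imports Defs begin

text \<open>
  M(G) \<le> Z(G): if A \<in> S(G) and x is a null vector of A vanishing on a zero forcing set Z,
  then a force u \<rightarrow> v is mirrored by row u of A x = 0, whose only possibly non-zero term is
  A_uv x_v with A_uv \<noteq> 0; hence x = 0, so the null space embeds into the coordinates of Z.

  Z(G) \<le> n/2 + 1: start with both ends of an edge. As long as the black set is not everything,
  connectivity gives a black vertex u with a white neighbour v; u also has a black neighbour,
  so by cubicity it has exactly two white neighbours v and b. Colouring v black lets u force b.
  Each added vertex thus blackens at least two new vertices, so 2|Z| \<le> |black| + 2 persists.
\<close>

lemma forced_mono: "forced E Z v \<Longrightarrow> Z \<subseteq> Z' \<Longrightarrow> forced E Z' v"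
  by (induction rule: forced.induct) (auto intro: forced.intros)

lemma zero_forcing_set_UNIV: "zero_forcing_set E UNIV"
  by (auto simp: zero_forcing_set_def intro: forced.init)

lemma zero_forcing_number_le:
  fixes E :: "'n::finite \<Rightarrow> 'n \<Rightarrow> bool"
  assumes "zero_forcing_set E Z"
  shows "zero_forcing_number E \<le> card Z"
  unfolding zero_forcing_number_def using assms by (intro Min_le) auto

lemma zero_forcing_number_attained:
  fixes E :: "'n::finite \<Rightarrow> 'n \<Rightarrow> bool"
  obtains Z where "zero_forcing_set E Z" "card Z = zero_forcing_number E"
proof -
  have "zero_forcing_number E \<in> card ` {Z. zero_forcing_set E Z}"
    unfolding zero_forcing_number_def using zero_forcing_set_UNIV by (intro Min_in) auto
  then show ?thesis using that by auto
qed

lemma dim_le_card_if_vanishing_on_coords_imp_zero: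
  fixes N :: "(real^'n::finite) set"
  assumes N: "subspace N" and vanish: "\<And>x. x \<in> N \<Longrightarrow> (\<forall>i\<in>Z. x $ i = 0) \<Longrightarrow> x = 0"
  shows "dim N \<le> card Z"
proof -
  define restrict where "restrict = (\<lambda>x::real^'n. \<chi> i. if i \<in> Z then x $ i else 0)"
  have lin: "linear restrict"
    unfolding restrict_def by (auto simp: linear_iff vec_eq_iff algebra_simps)
  have "inj_on restrict N"
  proof (rule inj_onI)
    fix x y assume "x \<in> N" "y \<in> N" "restrict x = restrict y"
    then have "x - y \<in> N" using N subspace_diff by blast
    moreover have "(x - y) $ i = 0" if "i \<in> Z" for i
      using arg_cong[where f = "\<lambda>z. z $ i", OF \<open>restrict x = restrict y\<close>] that
      by (simp add: restrict_def)
    ultimately have "x - y = 0" by (intro vanish) auto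
    then show "x = y" by simp
  qed
  then have "dim (restrict ` N) = dim N"
    using eucl.dim_image_eq[OF lin, of N] span_eq_iff[THEN iffD2, OF N] by simp
  moreover have "restrict ` N \<subseteq> span ((\<lambda>i. axis i (1::real)) ` Z)"
  proof
    fix y assume "y \<in> restrict ` N"
    then obtain x where y: "y = restrict x" by auto
    have "restrict x = (\<Sum>i\<in>Z. x $ i *\<^sub>R axis i 1)"
      unfolding restrict_def
      by (auto simp: vec_eq_iff sum_component axis_def if_distrib cong: if_cong)
    also have "\<dots> \<in> span ((\<lambda>i. axis i 1) ` Z)"
      by (intro span_sum span_scale span_base) auto
    finally show "y \<in> span ((\<lambda>i. axis i 1) ` Z)" using y by simp
  qed
  then have "dim (restrict ` N) \<le> card ((\<lambda>i. axis i (1::real)) ` Z)"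
    by (intro dim_le_card) auto
  moreover have "card ((\<lambda>i. axis i (1::real)) ` Z) \<le> card Z"
    by (rule card_image_le) simp
  ultimately show ?thesis by simp
qed

lemma null_vector_vanishes_on_forced:
  fixes A :: "real^'n::finite^'n"
  assumes irrefl: "\<forall>v. \<not> E v v" and A: "A \<in> SG E" and null: "A *v x = 0"
    and vanish: "\<forall>i\<in>Z. x $ i = 0" and forced: "forced E Z v"
  shows "x $ v = 0"
  using forced
proof (induction rule: forced.induct)
  case (init v)
  then show ?case using vanish by simp
next
  case (force u v)
  have pattern: "\<And>s t. s \<noteq> t \<Longrightarrow> A $ s $ t \<noteq> 0 \<longleftrightarrow> E s t"
    using A by (auto simp: SG_def)
  have "u \<noteq> v" using force.hyps(2) irrefl by auto
  have others: "A $ u $ w * x $ w = 0" if "w \<noteq> v" for w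
  proof (cases "w = u")
    case True
    then show ?thesis using force.IH(1) by simp
  next
    case False
    then show ?thesis using pattern[of u w] force.IH(2) that by auto
  qed
  have "(A *v x) $ u = (\<Sum>w\<in>{v}. A $ u $ w * x $ w)"
    unfolding matrix_vector_mult_def vec_lambda_beta
    by (rule sum.mono_neutral_right) (simp_all add: others)
  then have "(A *v x) $ u = A $ u $ v * x $ v" by simp
  moreover have "A $ u $ v \<noteq> 0" using pattern[OF \<open>u \<noteq> v\<close>] force.hyps(2) by simp
  ultimately show ?case using null by simp
qed

lemma nullity_le_card_zero_forcing_set:
  fixes E :: "'n::finite \<Rightarrow> 'n \<Rightarrow> bool"
  assumes irrefl: "\<forall>v. \<not> E v v" and A: "A \<in> SG E" and Z: "zero_forcing_set E Z"
  shows "nullity A \<le> card Z"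
  unfolding nullity_def
proof (rule dim_le_card_if_vanishing_on_coords_imp_zero)
  show "subspace {x. A *v x = 0}"
    unfolding subspace_def by (simp add: matrix_vector_right_distrib matrix_vector_mult_scaleR)
  fix x assume null: "x \<in> {x. A *v x = 0}" and vanish: "\<forall>i\<in>Z. x $ i = 0"
  have "x $ v = 0" for v
    using null_vector_vanishes_on_forced[of E, OF irrefl A _ vanish] null Z
    by (simp add: zero_forcing_set_def)
  then show "x = 0" by (simp add: vec_eq_iff)
qed

lemma max_nullity_le_zero_forcing_number:
  fixes E :: "'n::finite \<Rightarrow> 'n \<Rightarrow> bool"
  assumes sym: "\<forall>u v. E u v \<longrightarrow> E v u" and irrefl: "\<forall>v. \<not> E v v"
  shows "max_nullity E \<le> zero_forcing_number E"
proof -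
  have "(\<chi> s t. if E s t then (1::real) else 0) \<in> SG E"
    using sym by (auto simp: SG_def transpose_def vec_eq_iff)
  then have nonempty: "nullity ` SG E \<noteq> {}" by blast
  have "nullity A \<le> CARD('n)" if "A \<in> SG E" for A
    using nullity_le_card_zero_forcing_set[of E, OF irrefl that zero_forcing_set_UNIV] by simp
  then have "nullity ` SG E \<subseteq> {..CARD('n)}" by auto
  then have "finite (nullity ` SG E)" using finite_subset by blast
  moreover obtain Z where Z: "zero_forcing_set E Z" "card Z = zero_forcing_number E"
    by (rule zero_forcing_number_attained)
  ultimately show ?thesis
    unfolding max_nullity_def
    using nullity_le_card_zero_forcing_set[of E, OF irrefl _ Z(1)] Z(2) nonempty
    by (auto simp: Max_le_iff)
qed

lemma rtrancl_boundary_edge: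
  "(x, y) \<in> R\<^sup>* \<Longrightarrow> P x \<Longrightarrow> \<not> P y \<Longrightarrow> \<exists>u v. (u, v) \<in> R \<and> P u \<and> \<not> P v"
  by (induction rule: rtrancl_induct) auto

lemma forced_has_forced_neighbour:
  assumes sym: "\<forall>u v. E u v \<longrightarrow> E v u" and Z: "\<forall>z\<in>Z. \<exists>w. E z w \<and> forced E Z w"
    and "forced E Z v"
  shows "\<exists>w. E v w \<and> forced E Z w"
  using \<open>forced E Z v\<close>
proof cases
  case init then show ?thesis using Z by blast
next
  case (force u) then show ?thesis using sym by blast
qed

lemma cubic_forcing_step:
  fixes E :: "'n::finite \<Rightarrow> 'n \<Rightarrow> bool"
  assumes cubic: "cubic_graph E" and conn: "connected_graph E"
    and "Z \<noteq> {}" and Z: "\<forall>z\<in>Z. \<exists>w. E z w \<and> forced E Z w" and "\<not> zero_forcing_set E Z"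
  obtains v where "v \<notin> Z" "\<exists>u. E v u \<and> forced E Z u"
    "card {x. forced E Z x} + 2 \<le> card {x. forced E (insert v Z) x}"
proof -
  have sym: "\<forall>u v. E u v \<longrightarrow> E v u" and deg: "\<And>v. card {u. E v u} = 3"
    using cubic by (auto simp: cubic_graph_def)
  obtain z y where "z \<in> Z" "\<not> forced E Z y"
    using assms(3,5) by (auto simp: zero_forcing_set_def)
  moreover have "(z, y) \<in> {(x, y). E x y}\<^sup>*" using conn by (auto simp: connected_graph_def)
  ultimately have "\<exists>u v. (u, v) \<in> {(x, y). E x y} \<and> forced E Z u \<and> \<not> forced E Z v"
    by (intro rtrancl_boundary_edge) (auto intro: forced.init)
  then obtain u v where uv: "E u v" "forced E Z u" "\<not> forced E Z v" by blast
  have "\<exists>b. E u b \<and> b \<noteq> v \<and> \<not> forced E Z b"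
    using forced.force[OF uv(2,1)] uv(3) by blast
  then obtain b where b: "E u b" "b \<noteq> v" "\<not> forced E Z b" by blast
  obtain w where w: "E u w" "forced E Z w"
    using forced_has_forced_neighbour[OF sym Z uv(2)] by blast
  have "w \<noteq> v" "w \<noteq> b" using w uv b by auto
  then have "card {w, v, b} = 3" using b by (simp add: card_insert_if)
  moreover have "{w, v, b} \<subseteq> {x. E u x}" using w uv b by auto
  ultimately have neighbours: "{x. E u x} = {w, v, b}"
    using deg[of u] card_subset_eq[of "{x. E u x}" "{w, v, b}"] by simp
  define Z' where "Z' = insert v Z"
  have old: "forced E Z x \<Longrightarrow> forced E Z' x" for x
    by (erule forced_mono) (auto simp: Z'_def)
  have v': "forced E Z' v" by (simp add: Z'_def forced.init)
  have "\<forall>x. E u x \<and> x \<noteq> b \<longrightarrow> forced E Z' x"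
    using neighbours old[OF w(2)] v' by auto
  then have b': "forced E Z' b" using forced.force[OF old[OF uv(2)] b(1)] by blast
  have "insert v (insert b {x. forced E Z x}) \<subseteq> {x. forced E Z' x}"
    using old v' b' by blast
  then have "card (insert v (insert b {x. forced E Z x})) \<le> card {x. forced E Z' x}"
    by (intro card_mono) simp_all
  then have "card {x. forced E Z x} + 2 \<le> card {x. forced E Z' x}"
    using uv(3) b(2,3) by simp
  moreover have "v \<notin> Z" using uv(3) forced.init by metis
  moreover have "\<exists>u. E v u \<and> forced E Z u" using sym uv(1,2) by blast
  ultimately show ?thesis using that unfolding Z'_def by blast
qed

lemma cubic_zero_forcing_set_from_seed:
  fixes E :: "'n::finite \<Rightarrow> 'n \<Rightarrow> bool"
  assumes cubic: "cubic_graph E" and conn: "connected_graph E"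
  shows "Z \<noteq> {} \<Longrightarrow> \<forall>z\<in>Z. \<exists>w. E z w \<and> forced E Z w
    \<Longrightarrow> 2 * card Z \<le> card {v. forced E Z v} + 2
    \<Longrightarrow> \<exists>Z'. zero_forcing_set E Z' \<and> 2 * card Z' \<le> CARD('n) + 2"
proof (induction "CARD('n) - card {v. forced E Z v}" arbitrary: Z rule: less_induct)
  case less
  show ?case
  proof (cases "zero_forcing_set E Z")
    case True
    have "card {v. forced E Z v} \<le> CARD('n)" by (rule card_mono) auto
    then show ?thesis using True less.prems(3) by auto
  next
    case False
    obtain v where v: "v \<notin> Z" "\<exists>u. E v u \<and> forced E Z u"
      and grows: "card {x. forced E Z x} + 2 \<le> card {x. forced E (insert v Z) x}"
      using cubic_forcing_step[OF cubic conn less.prems(1,2) False] .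
    have old: "forced E Z x \<Longrightarrow> forced E (insert v Z) x" for x
      by (erule forced_mono) auto
    have "card {x. forced E (insert v Z) x} \<le> CARD('n)" by (rule card_mono) auto
    then have "CARD('n) - card {x. forced E (insert v Z) x} < CARD('n) - card {x. forced E Z x}"
      using grows by linarith
    moreover have "\<forall>z\<in>insert v Z. \<exists>w. E z w \<and> forced E (insert v Z) w"
      using v less.prems(2) old by blast
    moreover have "2 * card (insert v Z) \<le> card {x. forced E (insert v Z) x} + 2"
      using v(1) grows less.prems(3) by simp
    ultimately show ?thesis using less.hyps by blast
  qed
qed

lemma cubic_zero_forcing_number_le:
  fixes E :: "'n::finite \<Rightarrow> 'n \<Rightarrow> bool"
  assumes cubic: "cubic_graph E" and conn: "connected_graph E"
  shows "2 * zero_forcing_number E \<le> CARD('n) + 2"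
proof -
  have sym: "\<forall>u v. E u v \<longrightarrow> E v u" and irrefl: "\<forall>v. \<not> E v v"
    and deg: "\<And>v. card {u. E v u} = 3"
    using cubic by (auto simp: cubic_graph_def)
  obtain v w :: 'n where vw: "E v w"
    using deg[of undefined] by (metis Collect_empty_eq card.empty zero_neq_numeral)
  have "v \<noteq> w" using vw irrefl by auto
  have "{v, w} \<subseteq> {x. forced E {v, w} x}" by (auto intro: forced.init)
  then have "card {v, w} \<le> card {x. forced E {v, w} x}" by (intro card_mono) simp_all
  then have seed: "2 * card {v, w} \<le> card {x. forced E {v, w} x} + 2"
    using \<open>v \<noteq> w\<close> by simp
  have neighbours: "\<forall>z\<in>{v, w}. \<exists>u. E z u \<and> forced E {v, w} u"
    using vw sym by (auto intro: forced.init)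
  obtain Z where "zero_forcing_set E Z" "2 * card Z \<le> CARD('n) + 2"
    using cubic_zero_forcing_set_from_seed[OF cubic conn _ neighbours seed] by blast
  then show ?thesis using zero_forcing_number_le[of E Z] by linarith
qed

theorem mainTheorem6:
  fixes E :: "'n::finite \<Rightarrow> 'n \<Rightarrow> bool"
  assumes "cubic_graph E" and "connected_graph E"
  shows "max_nullity E \<le> zero_forcing_number E
    \<and> real (zero_forcing_number E) \<le> real CARD('n) / 2 + 1"
proof
  show "max_nullity E \<le> zero_forcing_number E"
    using assms(1) by (intro max_nullity_le_zero_forcing_number) (auto simp: cubic_graph_def)
  show "real (zero_forcing_number E) \<le> real CARD('n) / 2 + 1"
    using cubic_zero_forcing_number_le[OF assms] by linarith
qed

end
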